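(* Let $G$ be a connected graph, and let $P$ be an ear of $G$ containing at least five vertices. Let $H$ be the subgraph of $G$ induced by removing the internal vertices of $P$. If $\overline{H}$ has an orthogonal vector representation in $\mathbb{R}^3$ consisting of pairwise linearly independent vectors, then so does $\overline{G}$.
   Context: All graphs are finite and simple; $\overline{G}$ denotes the complement of $G$. An ear of a graph $G$ is a maximal path subgraph of $G$ whose internal vertices each have degree 2 in $G$. An orthogonal vector representation of a graph $G=(V,E)$ in $\mathbb{R}^d$ is a map $\phi:V\to\mathbb{R}^d$ with $\phi(v)\neq 0$ for all $v$, and for distinct $u,v$: $\langle\phi(u),\phi(v)\rangle=0$ if and only if $uv\notin E$. *)

theory Defs
  imports "HOL-Analysis.Analysis"
begin

definition simple_graph :: "'a set \<Rightarrow> ('a \<Rightarrow> 'a \<Rightarrow> bool) \<Rightarrow> bool" where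
  "simple_graph V E \<longleftrightarrow> finite V \<and> (\<forall>u v. E u v \<longrightarrow> u \<in> V \<and> v \<in> V)
     \<and> (\<forall>u v. E u v \<longrightarrow> E v u) \<and> (\<forall>v. \<not> E v v)"

definition connected_graph :: "'a set \<Rightarrow> ('a \<Rightarrow> 'a \<Rightarrow> bool) \<Rightarrow> bool" where
  "connected_graph V E \<longleftrightarrow> V \<noteq> {} \<and> (\<forall>u\<in>V. \<forall>v\<in>V. E\<^sup>*\<^sup>* u v)"

definition degree :: "'a set \<Rightarrow> ('a \<Rightarrow> 'a \<Rightarrow> bool) \<Rightarrow> 'a \<Rightarrow> nat" where
  "degree V E v = card {u \<in> V. E v u}"

definition is_path :: "'a set \<Rightarrow> ('a \<Rightarrow> 'a \<Rightarrow> bool) \<Rightarrow> 'a list \<Rightarrow> bool" where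
  "is_path V E p \<longleftrightarrow> p \<noteq> [] \<and> distinct p \<and> set p \<subseteq> V
     \<and> (\<forall>i. Suc i < length p \<longrightarrow> E (p ! i) (p ! Suc i))"

definition path_edges :: "'a list \<Rightarrow> 'a set set" where
  "path_edges p = {{p ! i, p ! Suc i} | i. Suc i < length p}"

definition internal_vertices :: "'a list \<Rightarrow> 'a set" where
  "internal_vertices p = {p ! i | i. 0 < i \<and> Suc i < length p}"

definition deg2_path :: "'a set \<Rightarrow> ('a \<Rightarrow> 'a \<Rightarrow> bool) \<Rightarrow> 'a list \<Rightarrow> bool" where
  "deg2_path V E p \<longleftrightarrow> is_path V E p \<and> (\<forall>v \<in> internal_vertices p. degree V E v = 2)"

definition is_ear :: "'a set \<Rightarrow> ('a \<Rightarrow> 'a \<Rightarrow> bool) \<Rightarrow> 'a list \<Rightarrow> bool" where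
  "is_ear V E p \<longleftrightarrow> deg2_path V E p \<and>
     (\<forall>q. deg2_path V E q \<and> set p \<subseteq> set q \<and> path_edges p \<subseteq> path_edges q
          \<longrightarrow> set q = set p \<and> path_edges q = path_edges p)"

definition induced_edges :: "('a \<Rightarrow> 'a \<Rightarrow> bool) \<Rightarrow> 'a set \<Rightarrow> 'a \<Rightarrow> 'a \<Rightarrow> bool" where
  "induced_edges E W u v \<longleftrightarrow> u \<in> W \<and> v \<in> W \<and> E u v"

definition complement_edges :: "'a set \<Rightarrow> ('a \<Rightarrow> 'a \<Rightarrow> bool) \<Rightarrow> 'a \<Rightarrow> 'a \<Rightarrow> bool" where
  "complement_edges V E u v \<longleftrightarrow> u \<in> V \<and> v \<in> V \<and> u \<noteq> v \<and> \<not> E u v"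

definition orthogonal_rep :: "'a set \<Rightarrow> ('a \<Rightarrow> 'a \<Rightarrow> bool) \<Rightarrow> ('a \<Rightarrow> real ^ 'n) \<Rightarrow> bool" where
  "orthogonal_rep V E \<phi> \<longleftrightarrow> (\<forall>v\<in>V. \<phi> v \<noteq> 0) \<and>
     (\<forall>u\<in>V. \<forall>v\<in>V. u \<noteq> v \<longrightarrow> (\<phi> u \<bullet> \<phi> v = 0 \<longleftrightarrow> \<not> E u v))"

definition pairwise_lin_indep :: "'a set \<Rightarrow> ('a \<Rightarrow> real ^ 'n) \<Rightarrow> bool" where
  "pairwise_lin_indep V \<phi> \<longleftrightarrow>
     (\<forall>u\<in>V. \<forall>v\<in>V. u \<noteq> v \<longrightarrow> \<phi> u \<noteq> \<phi> v \<and> independent {\<phi> u, \<phi> v})"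

end

theory Submission
  imports Defs
begin

(* Orthogonality of vectors in R^3 encodes adjacency in G, and pairwise independence means
   nonvanishing cross products. The internal vertices of the ear have degree 2, so the
   representation of the complement of H can be extended one vertex at a time. A vertex with a
   single neighbour among the represented ones gets a vector in the plane orthogonal to that
   neighbour's vector; each of the finitely many unwanted orthogonalities or parallelisms is
   satisfied by at most one direction of that plane, so a generic choice avoids all of them.
   Attaching internal vertices this way from one end leaves three of them, x1 x2 x3 between
   a and b. Then x3 and x1 are attached generically to b and a, and x2 must get the cross
   product of their vectors; the genericity of the vector of x1 is strengthened so that this
   cross product is orthogonal to nothing else. *)

unbundle cross3_syntax

lemma cross_eq_0_iff_parallel:
  fixes x y :: "real^3"
  shows "x \<times> y = 0 \<longleftrightarrow> x = 0 \<or> (\<exists>k. y = k *\<^sub>R x)"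
  by (metis cross_eq_0 collinear_lemma scale_zero_left)

lemma cross_commute_eq_0:
  fixes x y :: "real^3"
  shows "x \<times> y = 0 \<longleftrightarrow> y \<times> x = 0"
  by (metis cross_skew neg_equal_0_iff_equal)

lemma independent_pair_iff_cross_nonzero:
  fixes x y :: "real^3"
  assumes "x \<noteq> y"
  shows "independent {x, y} \<longleftrightarrow> x \<times> y \<noteq> 0"
proof -
  have "independent {x, y} \<longleftrightarrow> \<not> (y = 0 \<or> (\<exists>k. x = k *\<^sub>R y))"
    using assms by (auto simp: independent_insert span_singleton)
  also have "\<dots> \<longleftrightarrow> x \<times> y \<noteq> 0"
    by (metis cross_commute_eq_0 cross_eq_0_iff_parallel)
  finally show ?thesis .
qed

lemma orthogonal_to_nonparallel_pair_imp_parallel: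
  fixes x y p w :: "real^3"
  assumes "x \<times> y \<noteq> 0" "p \<bullet> x = 0" "p \<bullet> y = 0" "w \<bullet> x = 0" "w \<bullet> y = 0"
  shows "p \<times> w = 0"
proof -
  have "p \<times> (x \<times> y) = 0" "w \<times> (x \<times> y) = 0"
    using Lagrange[of p x y] Lagrange[of w x y] assms by simp_all
  then obtain k l where "p = k *\<^sub>R (x \<times> y)" "w = l *\<^sub>R (x \<times> y)"
    using assms(1) by (metis cross_commute_eq_0 cross_eq_0_iff_parallel)
  then show ?thesis by (simp add: cross_mult_left cross_mult_right)
qed

lemma cross_cross_nonzero:
  fixes p c v :: "real^3"
  assumes "p \<bullet> c \<noteq> 0" "c \<times> v \<noteq> 0"
  shows "p \<times> (c \<times> v) \<noteq> 0"
proof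
  assume "p \<times> (c \<times> v) = 0"
  then have "(p \<bullet> c) *\<^sub>R v = (p \<bullet> v) *\<^sub>R c"
    using Lagrange[of p c v] by simp
  then have "v = ((p \<bullet> v) / (p \<bullet> c)) *\<^sub>R c"
    using assms(1) by (metis divide_inverse_commute scaleR_scaleR
        real_vector.scale_left_imp_eq scaleR_one right_inverse)
  then show False
    using assms(2) by (metis cross_mult_right cross_refl scale_zero_right)
qed

lemma orthogonal_plane_basis:
  fixes p :: "real^3"
  assumes "p \<noteq> 0"
  obtains e1 e2 where "e1 \<bullet> p = 0" "e2 \<bullet> p = 0" "e1 \<times> e2 \<noteq> 0"
proof -
  obtain q where q: "p \<times> q \<noteq> 0"
    using cross_basis_nonzero[OF assms] by blast
  define e1 where "e1 = p \<times> q"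
  have "e1 \<times> (p \<times> e1) = (e1 \<bullet> e1) *\<^sub>R p"
    using Lagrange[of e1 p e1] by (simp add: e1_def dot_cross_self inner_commute)
  then have "e1 \<times> (p \<times> e1) \<noteq> 0"
    using q assms by (simp add: e1_def)
  moreover have "e1 \<bullet> p = 0" "(p \<times> e1) \<bullet> p = 0"
    by (simp_all add: e1_def dot_cross_self inner_commute)
  ultimately show ?thesis using that by blast
qed

text \<open>Each condition then holds at no more than one point of a line in the plane that misses 0.\<close>
lemma avoid_conditions_in_orthogonal_plane:
  fixes p :: "real^3"
  assumes "p \<noteq> 0" and "finite \<Q>"
    and sparse: "\<And>Q x y. Q \<in> \<Q> \<Longrightarrow> x \<bullet> p = 0 \<Longrightarrow> y \<bullet> p = 0 \<Longrightarrow> x \<times> y \<noteq> 0 \<Longrightarrow>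
      Q x \<Longrightarrow> Q y \<Longrightarrow> False"
  obtains x where "x \<bullet> p = 0" "x \<noteq> 0" "\<And>Q. Q \<in> \<Q> \<Longrightarrow> \<not> Q x"
proof -
  obtain e1 e2 where e: "e1 \<bullet> p = 0" "e2 \<bullet> p = 0" "e1 \<times> e2 \<noteq> 0"
    using orthogonal_plane_basis[OF assms(1)] by blast
  define X where "X t = e1 + t *\<^sub>R e2" for t :: real
  have X_orth: "X t \<bullet> p = 0" for t
    using e by (simp add: X_def inner_add_left)
  have "X t \<times> X s = (s - t) *\<^sub>R (e1 \<times> e2)" for t s
    using cross_skew[of e2 e1]
    by (simp add: X_def cross_add_left cross_add_right cross_mult_left cross_mult_right algebra_simps)
  then have X_nonparallel: "X t \<times> X s \<noteq> 0" if "t \<noteq> s" for t s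
    using e(3) that by simp
  have X_nonzero: "X t \<noteq> 0" for t
    using X_nonparallel[of t "t + 1"] by auto
  have "finite {t. Q (X t)}" if "Q \<in> \<Q>" for Q
  proof (cases "\<exists>t. Q (X t)")
    case True
    then obtain t where "Q (X t)" by blast
    then have "{t. Q (X t)} \<subseteq> {t}"
      using sparse[OF \<open>Q \<in> \<Q>\<close> X_orth X_orth X_nonparallel] by blast
    then show ?thesis
      using finite_subset by blast
  qed simp
  then have "finite (\<Union>Q\<in>\<Q>. {t. Q (X t)})"
    using assms(2) by blast
  then obtain t where "t \<notin> (\<Union>Q\<in>\<Q>. {t. Q (X t)})"
    using ex_new_if_finite[OF infinite_UNIV_char_0] by blast
  then show ?thesis
    using that X_orth X_nonzero by blast
qed

lemma generic_orthogonal_vector: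
  fixes p :: "real^3"
  assumes "p \<noteq> 0" "finite F" "\<And>w. w \<in> F \<Longrightarrow> p \<times> w \<noteq> 0" "finite G" "0 \<notin> G"
  obtains x where "x \<bullet> p = 0" "x \<noteq> 0" "\<And>w. w \<in> F \<Longrightarrow> x \<bullet> w \<noteq> 0"
    "\<And>v. v \<in> G \<Longrightarrow> x \<times> v \<noteq> 0"
proof -
  define \<Q> where "\<Q> = (\<lambda>w x. x \<bullet> w = 0) ` F \<union> (\<lambda>v x. x \<times> v = 0) ` G"
  have "finite \<Q>"
    using assms by (simp add: \<Q>_def)
  moreover have "False"
    if Q: "Q \<in> \<Q>" and xy: "x \<bullet> p = 0" "y \<bullet> p = 0" "x \<times> y \<noteq> 0" "Q x" "Q y" for Q x y
    using Q unfolding \<Q>_def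
  proof (elim UnE imageE)
    fix w assume "w \<in> F" "Q = (\<lambda>x. x \<bullet> w = 0)"
    then show False
      using orthogonal_to_nonparallel_pair_imp_parallel[OF xy(3), of p w] xy assms(3)
      by (simp add: inner_commute)
  next
    fix v assume "v \<in> G" "Q = (\<lambda>x. x \<times> v = 0)"
    then obtain k l where "x = k *\<^sub>R v" "y = l *\<^sub>R v"
      using xy assms(5) by (metis cross_commute_eq_0 cross_eq_0_iff_parallel)
    then show False
      using xy(3) by (simp add: cross_mult_left cross_mult_right)
  qed
  ultimately obtain x where x: "x \<bullet> p = 0" "x \<noteq> 0" "\<And>Q. Q \<in> \<Q> \<Longrightarrow> \<not> Q x"
    using avoid_conditions_in_orthogonal_plane[OF assms(1)] by metis
  show ?thesis
  proof (rule that[OF x(1,2)])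
    fix w assume "w \<in> F"
    then show "x \<bullet> w \<noteq> 0"
      using x(3) unfolding \<Q>_def by blast
  next
    fix v assume "v \<in> G"
    then show "x \<times> v \<noteq> 0"
      using x(3) unfolding \<Q>_def by blast
  qed
qed

text \<open>Orthogonality encodes adjacency in E, so this is an orthogonal representation of the
  complement of E in the paper's sense; pairwise independence is expressed by cross products.\<close>
definition indep_orth_rep :: "'a set \<Rightarrow> ('a \<Rightarrow> 'a \<Rightarrow> bool) \<Rightarrow> ('a \<Rightarrow> real^3) \<Rightarrow> bool" where
  "indep_orth_rep S E \<phi> \<longleftrightarrow> (\<forall>v\<in>S. \<phi> v \<noteq> 0) \<and>
     (\<forall>u\<in>S. \<forall>v\<in>S. u \<noteq> v \<longrightarrow> (\<phi> u \<bullet> \<phi> v = 0 \<longleftrightarrow> E u v) \<and> \<phi> u \<times> \<phi> v \<noteq> 0)"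

lemma indep_orth_repD:
  assumes "indep_orth_rep S E \<phi>" "u \<in> S"
  shows "\<phi> u \<noteq> 0"
    and "v \<in> S \<Longrightarrow> u \<noteq> v \<Longrightarrow> \<phi> u \<bullet> \<phi> v = 0 \<longleftrightarrow> E u v"
    and "v \<in> S \<Longrightarrow> u \<noteq> v \<Longrightarrow> \<phi> u \<times> \<phi> v \<noteq> 0"
  using assms unfolding indep_orth_rep_def by blast+

lemma complement_rep_iff_indep_orth_rep:
  fixes \<phi> :: "'a \<Rightarrow> real^3"
  shows "orthogonal_rep V (complement_edges V E) \<phi> \<and> pairwise_lin_indep V \<phi> \<longleftrightarrow> indep_orth_rep V E \<phi>"
proof -
  have "(x \<noteq> y \<and> independent {x, y}) \<longleftrightarrow> x \<times> y \<noteq> 0" for x y :: "real^3"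
    using independent_pair_iff_cross_nonzero by (cases "x = y") auto
  then show ?thesis
    unfolding orthogonal_rep_def pairwise_lin_indep_def complement_edges_def indep_orth_rep_def
    by auto
qed

lemma indep_orth_rep_induced_edges:
  "indep_orth_rep S (induced_edges E S) \<phi> \<longleftrightarrow> indep_orth_rep S E \<phi>"
  unfolding indep_orth_rep_def induced_edges_def by auto

lemma indep_orth_rep_cong:
  "(\<And>v. v \<in> S \<Longrightarrow> \<psi> v = \<phi> v) \<Longrightarrow> indep_orth_rep S E \<psi> \<longleftrightarrow> indep_orth_rep S E \<phi>"
  unfolding indep_orth_rep_def by simp

lemma indep_orth_rep_fun_upd:
  "x \<notin> S \<Longrightarrow> indep_orth_rep S E (\<phi>(x := y)) \<longleftrightarrow> indep_orth_rep S E \<phi>"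
  by (rule indep_orth_rep_cong) auto

lemma indep_orth_rep_insert:
  assumes "x \<notin> S" "symp E"
  shows "indep_orth_rep (insert x S) E \<psi> \<longleftrightarrow> indep_orth_rep S E \<psi> \<and> \<psi> x \<noteq> 0 \<and>
           (\<forall>v\<in>S. (\<psi> x \<bullet> \<psi> v = 0 \<longleftrightarrow> E x v) \<and> \<psi> x \<times> \<psi> v \<noteq> 0)"
proof -
  have "((\<psi> v \<bullet> \<psi> x = 0 \<longleftrightarrow> E v x) \<and> \<psi> v \<times> \<psi> x \<noteq> 0) \<longleftrightarrow>
        ((\<psi> x \<bullet> \<psi> v = 0 \<longleftrightarrow> E x v) \<and> \<psi> x \<times> \<psi> v \<noteq> 0)" for v
    using \<open>symp E\<close> cross_commute_eq_0 by (metis inner_commute sympD)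
  then show ?thesis
    using \<open>x \<notin> S\<close> unfolding indep_orth_rep_def by auto
qed

lemma indep_orth_rep_insert_update:
  assumes "x \<notin> S" "symp E" "indep_orth_rep S E \<phi>" "y \<noteq> 0"
    and new: "\<And>v. v \<in> S \<Longrightarrow> (y \<bullet> \<phi> v = 0 \<longleftrightarrow> E x v) \<and> y \<times> \<phi> v \<noteq> 0"
  shows "indep_orth_rep (insert x S) E (\<phi>(x := y))"
  unfolding indep_orth_rep_insert[OF assms(1,2)]
proof (intro conjI ballI)
  show "indep_orth_rep S E (\<phi>(x := y))"
    using assms(1,3) by (simp add: indep_orth_rep_fun_upd)
  show "(\<phi>(x := y)) x \<noteq> 0"
    using assms(4) by simp
next
  fix v assume "v \<in> S"
  then have "v \<noteq> x"
    using assms(1) by blast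
  then show "(\<phi>(x := y)) x \<bullet> (\<phi>(x := y)) v = 0 \<longleftrightarrow> E x v"
    and "(\<phi>(x := y)) x \<times> (\<phi>(x := y)) v \<noteq> 0"
    using new[OF \<open>v \<in> S\<close>] by simp_all
qed

lemma indep_orth_rep_add_pendant:
  assumes rep: "indep_orth_rep S E \<phi>" and "finite S" "symp E" "x \<notin> S" "a \<in> S"
    and adj: "\<And>u. u \<in> S \<Longrightarrow> E x u \<longleftrightarrow> u = a"
    and "finite F" "\<And>w. w \<in> F \<Longrightarrow> \<phi> a \<times> w \<noteq> 0"
  obtains y where "indep_orth_rep (insert x S) E (\<phi>(x := y))" "\<And>w. w \<in> F \<Longrightarrow> y \<bullet> w \<noteq> 0"
proof -
  have a_nonparallel: "\<phi> a \<times> w \<noteq> 0" if "w \<in> \<phi> ` (S - {a}) \<union> F" for w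
    using that assms(8) indep_orth_repD(3)[OF rep \<open>a \<in> S\<close>] by auto
  have fin: "finite (\<phi> ` (S - {a}) \<union> F)" "finite (\<phi> ` S)"
    using \<open>finite S\<close> \<open>finite F\<close> by simp_all
  have no_zero: "0 \<notin> \<phi> ` S"
    using indep_orth_repD(1)[OF rep] by auto
  obtain y where y: "y \<bullet> \<phi> a = 0" "y \<noteq> 0"
    "\<And>w. w \<in> \<phi> ` (S - {a}) \<union> F \<Longrightarrow> y \<bullet> w \<noteq> 0" "\<And>v. v \<in> \<phi> ` S \<Longrightarrow> y \<times> v \<noteq> 0"
    using generic_orthogonal_vector[OF indep_orth_repD(1)[OF rep \<open>a \<in> S\<close>] fin(1) a_nonparallel
        fin(2) no_zero] by blast
  have "(y \<bullet> \<phi> v = 0 \<longleftrightarrow> E x v) \<and> y \<times> \<phi> v \<noteq> 0" if "v \<in> S" for v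
    using y(1,3,4) adj[OF that] that by blast
  with assms(1,3,4) y(2) have "indep_orth_rep (insert x S) E (\<phi>(x := y))"
    by (intro indep_orth_rep_insert_update)
  then show ?thesis
    using that y(3) by blast
qed

text \<open>A vertex adjacent to exactly p and c has to be represented by a multiple of the cross product
  of their vectors.\<close>
lemma indep_orth_rep_add_apex:
  assumes rep: "indep_orth_rep S E \<phi>" and "symp E" "x \<notin> S" "p \<in> S" "c \<in> S" "p \<noteq> c"
    and adj: "\<And>u. u \<in> S \<Longrightarrow> E x u \<longleftrightarrow> u = p \<or> u = c"
    and off_plane: "\<And>w. w \<in> S - {p, c} \<Longrightarrow> \<phi> w \<bullet> (\<phi> p \<times> \<phi> c) \<noteq> 0"
    and not_orth_both: "\<And>w. w \<in> S \<Longrightarrow> \<phi> w \<bullet> \<phi> p = 0 \<Longrightarrow> \<phi> w \<bullet> \<phi> c \<noteq> 0"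
  shows "indep_orth_rep (insert x S) E (\<phi>(x := \<phi> p \<times> \<phi> c))"
proof (rule indep_orth_rep_insert_update[OF \<open>x \<notin> S\<close> \<open>symp E\<close> rep])
  show pc: "\<phi> p \<times> \<phi> c \<noteq> 0"
    using indep_orth_repD(3)[OF rep] assms(4-6) by simp
  fix v assume "v \<in> S"
  have "(\<phi> p \<times> \<phi> c) \<bullet> \<phi> v = 0 \<longleftrightarrow> v = p \<or> v = c"
  proof (cases "v = p \<or> v = c")
    case True
    then show ?thesis
      by (auto simp: dot_cross_self)
  next
    case False
    then show ?thesis
      using off_plane[of v] \<open>v \<in> S\<close> by (simp add: inner_commute)
  qed
  moreover have "(\<phi> p \<times> \<phi> c) \<times> \<phi> v \<noteq> 0"
  proof
    assume "(\<phi> p \<times> \<phi> c) \<times> \<phi> v = 0"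
    then obtain k where "\<phi> v = k *\<^sub>R (\<phi> p \<times> \<phi> c)"
      using pc cross_eq_0_iff_parallel by metis
    then have "\<phi> v \<bullet> \<phi> p = 0" "\<phi> v \<bullet> \<phi> c = 0"
      by (simp_all add: dot_cross_self)
    then show False
      using not_orth_both \<open>v \<in> S\<close> by blast
  qed
  ultimately show "((\<phi> p \<times> \<phi> c) \<bullet> \<phi> v = 0 \<longleftrightarrow> E x v) \<and> (\<phi> p \<times> \<phi> c) \<times> \<phi> v \<noteq> 0"
    using adj[OF \<open>v \<in> S\<close>] by blast
qed

lemma indep_orth_rep_add_path3:
  assumes rep: "indep_orth_rep S E \<phi>" and "finite S" "symp E" "a \<in> S" "b \<in> S" "a \<noteq> b"
    and "x1 \<notin> S" "x2 \<notin> S" "x3 \<notin> S" "distinct [x1, x2, x3]"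
    and adj1: "\<And>u. E x1 u \<longleftrightarrow> u = a \<or> u = x2"
    and adj2: "\<And>u. E x2 u \<longleftrightarrow> u = x1 \<or> u = x3"
    and adj3: "\<And>u. E x3 u \<longleftrightarrow> u = x2 \<or> u = b"
  shows "\<exists>\<psi>. indep_orth_rep (S \<union> {x1, x2, x3}) E \<psi>"
proof -
  have "E x3 u \<longleftrightarrow> u = b" if "u \<in> S" for u
    using adj3 \<open>x2 \<notin> S\<close> that by auto
  then obtain c where rep1: "indep_orth_rep (insert x3 S) E (\<phi>(x3 := c))"
    using indep_orth_rep_add_pendant[OF rep \<open>finite S\<close> \<open>symp E\<close> \<open>x3 \<notin> S\<close> \<open>b \<in> S\<close>, of "{}"]
    by blast
  define \<phi>1 where "\<phi>1 = \<phi>(x3 := c)"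
  have "c \<times> \<phi> w \<noteq> 0" if "w \<in> S" for w
    using indep_orth_repD(3)[OF rep1, of x3 w] that \<open>x3 \<notin> S\<close> by auto
  moreover have "\<phi> a \<bullet> c \<noteq> 0"
    using indep_orth_repD(2)[OF rep1, of x3 a] adj3[of a] assms(4,6,8,9)
    by (auto simp: inner_commute)
  ultimately have a_nonparallel: "\<phi>1 a \<times> w \<noteq> 0" if "w \<in> (\<lambda>w. c \<times> \<phi> w) ` S" for w
    using that cross_cross_nonzero \<open>a \<in> S\<close> \<open>x3 \<notin> S\<close> by (auto simp: \<phi>1_def)
  have adj1': "E x1 u \<longleftrightarrow> u = a" if "u \<in> insert x3 S" for u
    using adj1 \<open>x2 \<notin> S\<close> assms(10) that by auto
  have "x1 \<notin> insert x3 S" "a \<in> insert x3 S" "finite (insert x3 S)" "finite ((\<lambda>w. c \<times> \<phi> w) ` S)"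
    using \<open>x1 \<notin> S\<close> \<open>a \<in> S\<close> \<open>finite S\<close> assms(10) by auto
  then obtain y where rep2: "indep_orth_rep (insert x1 (insert x3 S)) E (\<phi>1(x1 := y))"
    and "\<And>w. w \<in> (\<lambda>w. c \<times> \<phi> w) ` S \<Longrightarrow> y \<bullet> w \<noteq> 0"
    using indep_orth_rep_add_pendant[OF rep1[folded \<phi>1_def] _ \<open>symp E\<close> _ _ adj1' _ a_nonparallel]
    by metis
  then have y_off_plane: "y \<bullet> (c \<times> \<phi> w) \<noteq> 0" if "w \<in> S" for w
    using that by blast
  define \<phi>2 where "\<phi>2 = \<phi>1(x1 := y)"
  have \<phi>2: "\<phi>2 x1 = y" "\<phi>2 x3 = c" "\<And>w. w \<in> S \<Longrightarrow> \<phi>2 w = \<phi> w"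
    using assms(7,9,10) by (auto simp: \<phi>2_def \<phi>1_def)
  have "indep_orth_rep (insert x2 (insert x1 (insert x3 S))) E (\<phi>2(x2 := \<phi>2 x1 \<times> \<phi>2 x3))"
  proof (rule indep_orth_rep_add_apex[OF rep2[folded \<phi>2_def] \<open>symp E\<close>])
    show "x2 \<notin> insert x1 (insert x3 S)" "x1 \<in> insert x1 (insert x3 S)"
      "x3 \<in> insert x1 (insert x3 S)" "x1 \<noteq> x3"
      using assms(8,10) by auto
    show "E x2 u \<longleftrightarrow> u = x1 \<or> u = x3" for u
      by (rule adj2)
  next
    fix w assume "w \<in> insert x1 (insert x3 S) - {x1, x3}"
    then show "\<phi>2 w \<bullet> (\<phi>2 x1 \<times> \<phi>2 x3) \<noteq> 0"
      using y_off_plane[of w] cross_triple[of y c "\<phi> w"] \<phi>2 by (simp add: inner_commute)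
  next
    fix w assume w: "w \<in> insert x1 (insert x3 S)" and orth_y: "\<phi>2 w \<bullet> \<phi>2 x1 = 0"
    note rep2' = rep2[folded \<phi>2_def]
    show "\<phi>2 w \<bullet> \<phi>2 x3 \<noteq> 0"
    proof
      assume orth_c: "\<phi>2 w \<bullet> \<phi>2 x3 = 0"
      then have "w \<noteq> x3"
        using indep_orth_repD(1)[OF rep2', of x3] by auto
      then have "E x3 w"
        using indep_orth_repD(2)[OF rep2' w, of x3] orth_c \<open>symp E\<close> by (auto dest: sympD)
      then have "w = b"
        using adj3 w assms(8,10) by auto
      then have "E x1 b"
        using indep_orth_repD(2)[OF rep2' w, of x1] orth_y \<open>symp E\<close> \<open>b \<in> S\<close> \<open>x1 \<notin> S\<close>
        by (auto dest: sympD)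
      then show False
        using adj1 \<open>a \<noteq> b\<close> \<open>b \<in> S\<close> \<open>x2 \<notin> S\<close> by auto
    qed
  qed
  moreover have "insert x2 (insert x1 (insert x3 S)) = S \<union> {x1, x2, x3}"
    by auto
  ultimately show ?thesis
    by auto
qed

lemma internal_vertices_eq: "internal_vertices P = set (butlast (tl P))"
proof -
  have "internal_vertices P = {P ! Suc j | j. j < length P - 2}"
    unfolding internal_vertices_def by (metis Suc_pred' less_diff_conv add_2_eq_Suc' zero_less_Suc)
  also have "\<dots> = {butlast (tl P) ! j | j. j < length P - 2}"
  proof -
    have "P ! Suc j = butlast (tl P) ! j" if "j < length P - 2" for j
      using that by (simp add: nth_butlast nth_tl)
    then show ?thesis
      unfolding setcompr_eq_image by (intro image_cong) auto
  qed
  also have "\<dots> = set (butlast (tl P))"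
    by (auto simp: set_conv_nth)
  finally show ?thesis .
qed

lemma internal_vertices_Cons:
  "internal_vertices (a # P) = set (butlast P)"
  by (simp add: internal_vertices_eq)

lemma hd_not_internal_vertex: "distinct P \<Longrightarrow> hd P \<notin> internal_vertices P"
  by (cases P) (auto simp: internal_vertices_eq dest: in_set_butlastD)

lemma last_not_internal_vertex:
  assumes "distinct P"
  shows "last P \<notin> internal_vertices P"
proof (cases P rule: rev_cases)
  case (snoc ys y)
  then show ?thesis
    using assms by (cases ys) (auto simp: internal_vertices_eq butlast_tl)
qed (simp add: internal_vertices_def)

text \<open>Induction on the path: its first internal vertex is attached as a pendant vertex to the
  starting point, which shortens the path by one, until three internal vertices are left.\<close>
lemma indep_orth_rep_add_path:
  assumes "indep_orth_rep S E \<phi>" "finite S" "symp E" "distinct P" "5 \<le> length P"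
    and "hd P \<in> S" "last P \<in> S" "internal_vertices P \<inter> S = {}"
    and "\<And>i u. 0 < i \<Longrightarrow> Suc i < length P \<Longrightarrow> E (P ! i) u \<longleftrightarrow> u = P ! (i - 1) \<or> u = P ! Suc i"
  shows "\<exists>\<psi>. indep_orth_rep (S \<union> internal_vertices P) E \<psi>"
  using assms
proof (induction P arbitrary: S \<phi>)
  case Nil
  then show ?case by simp
next
  case (Cons a P)
  note adj = Cons.prems(9)
  obtain x r where P: "P = x # r"
    using Cons.prems(5) by (cases P) auto
  have internal: "internal_vertices (a # P) = insert x (set (butlast r))"
    using Cons.prems(5) by (auto simp: internal_vertices_Cons P)
  show ?case
  proof (cases "length P = 4")
    case True
    then obtain x2 x3 b where r: "r = [x2, x3, b]"
      using P by (auto simp: numeral_eq_Suc length_Suc_conv)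
    have "\<exists>\<psi>. indep_orth_rep (S \<union> {x, x2, x3}) E \<psi>"
    proof (rule indep_orth_rep_add_path3[OF Cons.prems(1-3)])
      show "a \<in> S" "b \<in> S" "a \<noteq> b" "x \<notin> S" "x2 \<notin> S" "x3 \<notin> S" "distinct [x, x2, x3]"
        using Cons.prems(4,6-8) internal by (auto simp: P r)
      show "E x u \<longleftrightarrow> u = a \<or> u = x2" "E x2 u \<longleftrightarrow> u = x \<or> u = x3" "E x3 u \<longleftrightarrow> u = x2 \<or> u = b" for u
        using adj[of 1 u] adj[of 2 u] adj[of 3 u] by (simp_all add: P r)
    qed
    then show ?thesis
      using internal by (simp add: r)
  next
    case False
    then have "5 \<le> length P"
      using Cons.prems(5) by simp
    have "(a # P) ! 2 \<in> internal_vertices (a # P)"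
      using \<open>5 \<le> length P\<close> unfolding internal_vertices_def by force
    moreover have "r \<noteq> []"
      using \<open>5 \<le> length P\<close> by (auto simp: P)
    ultimately have "E x u \<longleftrightarrow> u = a" if "u \<in> S" for u
      using adj[of 1 u] Cons.prems(8) that by (auto simp: P)
    then obtain y where rep: "indep_orth_rep (insert x S) E (\<phi>(x := y))"
      using indep_orth_rep_add_pendant[OF Cons.prems(1-3) _ Cons.prems(6), of x "{}"]
        Cons.prems(8) internal by auto
    have "\<exists>\<psi>. indep_orth_rep (insert x S \<union> internal_vertices P) E \<psi>"
    proof (rule Cons.IH[OF rep])
      show "finite (insert x S)" "symp E" "distinct P" "5 \<le> length P" "hd P \<in> insert x S"
        using Cons.prems(2-4) \<open>5 \<le> length P\<close> by (simp_all add: P)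
      show "last P \<in> insert x S"
        using Cons.prems(7) by (simp add: P)
      show "internal_vertices P \<inter> insert x S = {}"
        using Cons.prems(4,8) internal by (auto simp: P internal_vertices_Cons dest: in_set_butlastD)
      show "E (P ! i) u \<longleftrightarrow> u = P ! (i - 1) \<or> u = P ! Suc i" if "0 < i" "Suc i < length P" for i u
        using adj[of "Suc i" u] that by simp
    qed
    moreover have "insert x S \<union> internal_vertices P = S \<union> internal_vertices (a # P)"
      using internal by (auto simp: P internal_vertices_Cons)
    ultimately show ?thesis
      by simp
  qed
qed

lemma deg2_path_internal_adj:
  assumes "simple_graph V E" "deg2_path V E P" "0 < i" "Suc i < length P"
  shows "E (P ! i) u \<longleftrightarrow> u = P ! (i - 1) \<or> u = P ! Suc i"
proof -
  have E_in_V: "\<And>u v. E u v \<Longrightarrow> u \<in> V \<and> v \<in> V" and "finite V" "symp E"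
    using assms(1) unfolding simple_graph_def symp_def by blast+
  have path: "distinct P" "\<And>j. Suc j < length P \<Longrightarrow> E (P ! j) (P ! Suc j)"
    and deg: "\<And>v. v \<in> internal_vertices P \<Longrightarrow> degree V E v = 2"
    using assms(2) unfolding deg2_path_def is_path_def by blast+
  define N where "N = {u \<in> V. E (P ! i) u}"
  have "P ! i \<in> internal_vertices P"
    using assms(3,4) unfolding internal_vertices_def by blast
  then have "card N = 2"
    using deg unfolding degree_def N_def by simp
  have "E (P ! (i - 1)) (P ! i)"
    using path(2)[of "i - 1"] assms(3,4) by simp
  then have "E (P ! i) (P ! (i - 1))"
    by (rule sympD[OF \<open>symp E\<close>])
  moreover have "E (P ! i) (P ! Suc i)"
    using path(2) assms(4) by blast
  ultimately have "{P ! (i - 1), P ! Suc i} \<subseteq> N"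
    using E_in_V unfolding N_def by blast
  moreover have "card {P ! (i - 1), P ! Suc i} = 2"
    using path(1) assms(3,4) by (simp add: nth_eq_iff_index_eq)
  moreover have "finite N"
    using \<open>finite V\<close> by (simp add: N_def)
  ultimately have "{P ! (i - 1), P ! Suc i} = N"
    using \<open>card N = 2\<close> by (simp add: card_subset_eq)
  then show ?thesis
    using E_in_V unfolding N_def by blast
qed

theorem proposition4p4:
  fixes V :: "'a set" and E :: "'a \<Rightarrow> 'a \<Rightarrow> bool" and P :: "'a list"
  assumes "simple_graph V E"
    and "connected_graph V E"
    and "is_ear V E P"
    and "length P \<ge> 5"
  defines "W \<equiv> V - internal_vertices P"
  assumes "\<exists>\<psi> :: 'a \<Rightarrow> real ^ 3.
             orthogonal_rep W (complement_edges W (induced_edges E W)) \<psi> \<and> pairwise_lin_indep W \<psi>"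
  shows "\<exists>\<phi> :: 'a \<Rightarrow> real ^ 3.
           orthogonal_rep V (complement_edges V E) \<phi> \<and> pairwise_lin_indep V \<phi>"
proof -
  have "finite V" "symp E"
    using assms(1) unfolding simple_graph_def symp_def by blast+
  have deg2: "deg2_path V E P"
    using assms(3) unfolding is_ear_def by blast
  then have "distinct P" "set P \<subseteq> V"
    unfolding deg2_path_def is_path_def by blast+
  obtain \<psi> where "indep_orth_rep W E \<psi>"
    using assms(6) by (auto simp: complement_rep_iff_indep_orth_rep indep_orth_rep_induced_edges)
  moreover have "P \<noteq> []"
    using assms(4) by auto
  then have "hd P \<in> W" "last P \<in> W"
    using \<open>set P \<subseteq> V\<close> hd_not_internal_vertex[OF \<open>distinct P\<close>]
      last_not_internal_vertex[OF \<open>distinct P\<close>] unfolding W_def by auto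
  moreover have "finite W" "internal_vertices P \<inter> W = {}"
    using \<open>finite V\<close> unfolding W_def by auto
  ultimately obtain \<phi> where "indep_orth_rep (W \<union> internal_vertices P) E \<phi>"
    using indep_orth_rep_add_path[OF _ _ \<open>symp E\<close> \<open>distinct P\<close> assms(4) _ _ _
        deg2_path_internal_adj[OF assms(1) deg2]] by blast
  moreover have "W \<union> internal_vertices P = V"
    using \<open>set P \<subseteq> V\<close> unfolding W_def internal_vertices_def by auto
  ultimately show ?thesis
    using complement_rep_iff_indep_orth_rep by metis
qed

end
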